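(* Let $G$ be a group, let $\tau,\rho\in\mathrm{Aut}(G)$ and $\sigma\in\mathrm{End}(G)$ be such that $\rho\circ\tau=\tau\circ\rho$, $\rho\circ\sigma=\sigma\circ\rho$, and for all $y,z\in G$ \[\tau(\sigma(y))\,\sigma(z)=\tau(\sigma(\rho(z)))\,\sigma(\tau(y))\,\sigma(\sigma(z)).\] Define $B:G\times G\to G\times G$ by $B(x,y)=(\tau(y)\sigma(x),\,\rho(x))$. Then $(G,B)$ is a birack, with kink map given by $\pi(x)=\tau(\rho(x))\,\sigma(x)$.
   Context: Let $X$ be a set. A map $B:X\times X\to X\times X$, written $B=(B_1,B_2)$, is strongly invertible if: (i) $B$ is a bijection; (ii) there is a unique invertible map $S:X\times X\to X\times X$ (the sideways map) with $S(B_1(x,y),x)=(B_2(x,y),y)$ for all $x,y$; (iii) writing $S=(S_1,S_2)$, $S^{-1}=(S^{-1}_1,S^{-1}_2)$ and $\Delta(x)=(x,x)$, each of $S_1\circ\Delta$, $S_2\circ\Delta$, $S^{-1}_1\circ\Delta$, $S^{-1}_2\circ\Delta$ is a bijection $X\to X$. A birack is a pair $(X,B)$ with $B$ strongly invertible satisfying the set-theoretic Yang–Baxter equation $(B\times\mathrm{Id})(\mathrm{Id}\times B)(B\times\mathrm{Id})=(\mathrm{Id}\times B)(B\times\mathrm{Id})(\mathrm{Id}\times B)$. Its kink map is $\pi=S^{-1}_1\circ\Delta\circ(S^{-1}_2\circ\Delta)^{-1}$. Group multiplication in $G$ is written by juxtaposition. *)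

theory Defs
  imports Main
begin

text \<open>A group is modelled by a type of class group_add (not necessarily commutative);
  the group multiplication (juxtaposition in the paper) is written +.\<close>

definition group_hom :: "('a::group_add \<Rightarrow> 'a) \<Rightarrow> bool" where
  "group_hom f \<longleftrightarrow> (\<forall>a b. f (a + b) = f a + f b)"

definition group_aut :: "('a::group_add \<Rightarrow> 'a) \<Rightarrow> bool" where
  "group_aut f \<longleftrightarrow> group_hom f \<and> bij f"

definition is_sideways :: "('a \<times> 'a \<Rightarrow> 'a \<times> 'a) \<Rightarrow> ('a \<times> 'a \<Rightarrow> 'a \<times> 'a) \<Rightarrow> bool" where
  "is_sideways B S \<longleftrightarrow> bij S \<and> (\<forall>x y. S (fst (B (x, y)), x) = (snd (B (x, y)), y))"

definition sideways :: "('a \<times> 'a \<Rightarrow> 'a \<times> 'a) \<Rightarrow> ('a \<times> 'a \<Rightarrow> 'a \<times> 'a)" where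
  "sideways B = (THE S. is_sideways B S)"

definition strongly_invertible :: "('a \<times> 'a \<Rightarrow> 'a \<times> 'a) \<Rightarrow> bool" where
  "strongly_invertible B \<longleftrightarrow>
     bij B \<and> (\<exists>!S. is_sideways B S) \<and>
     (let S = sideways B in
        bij (\<lambda>x. fst (S (x, x))) \<and> bij (\<lambda>x. snd (S (x, x))) \<and>
        bij (\<lambda>x. fst (inv S (x, x))) \<and> bij (\<lambda>x. snd (inv S (x, x))))"

definition B_Id :: "('a \<times> 'a \<Rightarrow> 'a \<times> 'a) \<Rightarrow> 'a \<times> 'a \<times> 'a \<Rightarrow> 'a \<times> 'a \<times> 'a" where
  "B_Id B = (\<lambda>(x, y, z). (fst (B (x, y)), snd (B (x, y)), z))"

definition Id_B :: "('a \<times> 'a \<Rightarrow> 'a \<times> 'a) \<Rightarrow> 'a \<times> 'a \<times> 'a \<Rightarrow> 'a \<times> 'a \<times> 'a" where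
  "Id_B B = (\<lambda>(x, y, z). (x, fst (B (y, z)), snd (B (y, z))))"

definition yang_baxter :: "('a \<times> 'a \<Rightarrow> 'a \<times> 'a) \<Rightarrow> bool" where
  "yang_baxter B \<longleftrightarrow> B_Id B \<circ> Id_B B \<circ> B_Id B = Id_B B \<circ> B_Id B \<circ> Id_B B"

definition birack :: "('a \<times> 'a \<Rightarrow> 'a \<times> 'a) \<Rightarrow> bool" where
  "birack B \<longleftrightarrow> strongly_invertible B \<and> yang_baxter B"

definition kink :: "('a \<times> 'a \<Rightarrow> 'a \<times> 'a) \<Rightarrow> 'a \<Rightarrow> 'a" where
  "kink B = (let S = sideways B in
     (\<lambda>x. fst (inv S (x, x))) \<circ> inv (\<lambda>x. snd (inv S (x, x))))"

end

theory Submission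
  imports Defs
begin

(* The map B(x,y) = (tau y + sigma x, rho x) has first component y \<mapsto> tau y + sigma x
   bijective for each fixed x, so its sideways map is forced:
     S(a,x) = (rho x, tau\<inverse>(a - sigma x)),   S\<inverse>(u,y) = (tau y + sigma(rho\<inverse> u), rho\<inverse> u).
   On the diagonal, S gives rho and tau\<inverse> \<circ> (x \<mapsto> x - sigma x), while S\<inverse> gives
   (x \<mapsto> g x + sigma x) \<circ> rho\<inverse> and rho\<inverse>, where g = tau \<circ> rho.  The hypothesis yields
   tau \<circ> sigma = sigma \<circ> tau (put z = 0) and sigma z = g(sigma z) + sigma(sigma z) (put y = 0);
   from these x \<mapsto> x - sigma x is a bijection, and x \<mapsto> g x + sigma x is its inverse composed
   with g.  The Yang-Baxter equation is a direct componentwise computation, and the kink map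
   is read off from S\<inverse>. *)

lemma hom_add: "group_hom f \<Longrightarrow> f (a + b) = f a + f b"
  unfolding group_hom_def by blast

lemma hom_zero: "group_hom (f::'a::group_add \<Rightarrow> 'a) \<Longrightarrow> f 0 = 0"
  using hom_add[of f 0 0] by (metis add.right_neutral add_left_cancel)

lemma hom_diff: "group_hom (f::'a::group_add \<Rightarrow> 'a) \<Longrightarrow> f (a - b) = f a - f b"
  using hom_add[of f "a - b" b] by (simp add: eq_diff_eq)

lemma aut_inv: "group_aut (f::'a::group_add \<Rightarrow> 'a) \<Longrightarrow> group_aut (inv f)"
proof -
  assume f: "group_aut f"
  then have hom: "group_hom f" and bij: "bij f" by (auto simp: group_aut_def)
  have "inv f (a + b) = inv f a + inv f b" for a b
  proof -
    have "inv f (a + b) = inv f (f (inv f a) + f (inv f b))"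
      by (simp add: bij bij_is_surj surj_f_inv_f)
    also have "\<dots> = inv f a + inv f b"
      by (simp add: hom_add[OF hom, symmetric] bij bij_is_inj)
    finally show ?thesis .
  qed
  then show ?thesis using bij by (simp add: group_aut_def group_hom_def bij_imp_bij_inv)
qed

lemma commute_inv:
  assumes "bij g" and "\<And>x. s (g x) = g (s x)"
  shows "s (inv g x) = inv g (s x)"
  by (metis assms bij_inv_eq_iff)

lemma bij_by_inv: "(\<And>x. g (f x) = x) \<Longrightarrow> (\<And>y. f (g y) = y) \<Longrightarrow> bij f"
  by (rule o_bij[of g]) (auto simp: fun_eq_iff)

lemma inv_by_inv: "(\<And>x. g (f x) = x) \<Longrightarrow> (\<And>y. f (g y) = y) \<Longrightarrow> inv f = g"
  by (rule inv_equality) auto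

text \<open>If every partial map y \<mapsto> B1(x,y) is onto, the sideways condition determines S
  pointwise, so a sideways map, once found, is the unique one.\<close>
lemma sideways_unique:
  assumes S: "is_sideways B S" and onto: "\<And>x. surj (\<lambda>y. fst (B (x, y)))"
  shows "\<exists>!S. is_sideways B S" and "sideways B = S"
proof -
  have eq: "S' = S" if S': "is_sideways B S'" for S'
  proof
    fix p :: "'a \<times> 'a"
    obtain a x where p: "p = (a, x)" by (cases p)
    obtain y where a: "a = fst (B (x, y))" using onto[of x] by (blast dest: surjD)
    have "S' (fst (B (x, y)), x) = (snd (B (x, y)), y)"
      using S' unfolding is_sideways_def by blast
    moreover have "S (fst (B (x, y)), x) = (snd (B (x, y)), y)"
      using S unfolding is_sideways_def by blast
    ultimately show "S' p = S p" by (simp add: p a)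
  qed
  show "\<exists>!S. is_sideways B S" using S eq by blast
  show "sideways B = S" unfolding sideways_def using S eq by (rule the_equality)
qed

lemma strongly_invertibleI:
  assumes "bij B" and S: "is_sideways B S" and "\<And>x. surj (\<lambda>y. fst (B (x, y)))"
    and "bij (\<lambda>x. fst (S (x, x)))" and "bij (\<lambda>x. snd (S (x, x)))"
    and "bij (\<lambda>x. fst (inv S (x, x)))" and "bij (\<lambda>x. snd (inv S (x, x)))"
  shows "strongly_invertible B"
  using assms sideways_unique[OF S] by (simp add: strongly_invertible_def)

lemma kink_eq:
  assumes S: "is_sideways B S" and "\<And>x. surj (\<lambda>y. fst (B (x, y)))"
  shows "kink B = (\<lambda>x. fst (inv S (x, x))) \<circ> inv (\<lambda>x. snd (inv S (x, x)))"
  using sideways_unique[OF assms] by (simp add: kink_def)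

lemma shift_bij:
  fixes g \<sigma> :: "'a::group_add \<Rightarrow> 'a"
  assumes g: "group_aut g" and \<sigma>: "group_hom \<sigma>" and comm: "\<And>x. \<sigma> (g x) = g (\<sigma> x)"
    and split: "\<And>z. \<sigma> z = g (\<sigma> z) + \<sigma> (\<sigma> z)"
  shows "bij (\<lambda>x. x - \<sigma> x)"
proof -
  have bij_g: "bij g" using g by (simp add: group_aut_def)
  have gi: "group_hom (inv g)" using aut_inv[OF g] by (simp add: group_aut_def)
  have shift_sigma: "\<sigma> (inv g a) - \<sigma> (\<sigma> (inv g a)) = \<sigma> a" for a
  proof -
    have "\<sigma> (inv g a) - \<sigma> (\<sigma> (inv g a)) = g (\<sigma> (inv g a))"
      using split[of "inv g a"] by (simp add: diff_eq_eq)
    also have "\<dots> = \<sigma> a" by (simp add: comm[symmetric] bij_g bij_is_surj surj_f_inv_f)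
    finally show ?thesis .
  qed
  show ?thesis
  proof (rule bij_by_inv[of "\<lambda>a. a + \<sigma> (inv g a)"])
    fix x
    have "inv g (x - \<sigma> x) = inv g x - \<sigma> (inv g x)"
      by (simp add: hom_diff[OF gi] commute_inv[of g \<sigma>, OF bij_g comm])
    then have "\<sigma> (inv g (x - \<sigma> x)) = \<sigma> x"
      by (simp add: hom_diff[OF \<sigma>] shift_sigma)
    then show "x - \<sigma> x + \<sigma> (inv g (x - \<sigma> x)) = x" by simp
  next
    fix a
    have "a + \<sigma> (inv g a) - \<sigma> (a + \<sigma> (inv g a))
        = a + (\<sigma> (inv g a) - \<sigma> (\<sigma> (inv g a))) - \<sigma> a"
      by (simp only: hom_add[OF \<sigma>] diff_conv_add_uminus add.assoc minus_add)
    then show "a + \<sigma> (inv g a) - \<sigma> (a + \<sigma> (inv g a)) = a"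
      by (simp add: shift_sigma)
  qed
qed

text \<open>Composing with an automorphism g, the map x \<mapsto> g x + sigma x is bijective as well:
  the shift map sends g x + sigma x to g x.\<close>
lemma shift_twisted_bij:
  fixes g \<sigma> :: "'a::group_add \<Rightarrow> 'a"
  assumes g: "group_aut g" and \<sigma>: "group_hom \<sigma>" and comm: "\<And>x. \<sigma> (g x) = g (\<sigma> x)"
    and split: "\<And>z. \<sigma> z = g (\<sigma> z) + \<sigma> (\<sigma> z)"
  shows "bij (\<lambda>x. g x + \<sigma> x)"
proof -
  let ?h = "\<lambda>x. x - \<sigma> x"
  have bij_h: "bij ?h" by (rule shift_bij[OF assms])
  have "?h (g x + \<sigma> x) = g x + (\<sigma> x - \<sigma> (\<sigma> x)) - g (\<sigma> x)" for x
    by (simp only: hom_add[OF \<sigma>] comm diff_conv_add_uminus add.assoc minus_add)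
  also have "g x + (\<sigma> x - \<sigma> (\<sigma> x)) - g (\<sigma> x) = g x" for x
    using split[of x] by (simp add: diff_eq_eq add.assoc)
  finally have sends: "?h (g x + \<sigma> x) = g x" for x .
  have "(\<lambda>x. g x + \<sigma> x) = inv ?h \<circ> g"
    using inv_f_eq[OF bij_is_inj[OF bij_h] sends] by (simp add: fun_eq_iff)
  then show ?thesis
    using g bij_h by (simp add: group_aut_def bij_comp bij_imp_bij_inv)
qed

lemma yang_baxter_twisted:
  fixes \<tau> \<rho> \<sigma> :: "'a::group_add \<Rightarrow> 'a"
  assumes \<tau>: "group_hom \<tau>" and \<rho>: "group_hom \<rho>" and \<sigma>: "group_hom \<sigma>"
    and rho_tau: "\<And>x. \<rho> (\<tau> x) = \<tau> (\<rho> x)" and rho_sigma: "\<And>x. \<rho> (\<sigma> x) = \<sigma> (\<rho> x)"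
    and twist: "\<And>y z. \<tau> (\<sigma> y) + \<sigma> z = \<tau> (\<sigma> (\<rho> z)) + \<sigma> (\<tau> y) + \<sigma> (\<sigma> z)"
  shows "yang_baxter (\<lambda>(x, y). (\<tau> y + \<sigma> x, \<rho> x))"
  unfolding yang_baxter_def B_Id_def Id_B_def
proof (rule ext, clarsimp)
  fix x y z
  show "\<tau> (\<tau> z + \<sigma> (\<rho> x)) + \<sigma> (\<tau> y + \<sigma> x) = \<tau> (\<tau> z + \<sigma> y) + \<sigma> x \<and>
        \<rho> (\<tau> y + \<sigma> x) = \<tau> (\<rho> y) + \<sigma> (\<rho> x)"
    using twist[of y x]
    by (simp add: hom_add[OF \<tau>] hom_add[OF \<sigma>] hom_add[OF \<rho>] add.assoc rho_tau rho_sigma)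
qed

locale twisted_birack =
  fixes \<tau> \<rho> \<sigma> :: "'a::group_add \<Rightarrow> 'a"
  assumes tau_aut: "group_aut \<tau>" and rho_aut: "group_aut \<rho>" and sigma_hom: "group_hom \<sigma>"
    and rho_tau: "\<rho> \<circ> \<tau> = \<tau> \<circ> \<rho>" and rho_sigma: "\<rho> \<circ> \<sigma> = \<sigma> \<circ> \<rho>"
    and twist: "\<forall>y z. \<tau> (\<sigma> y) + \<sigma> z = \<tau> (\<sigma> (\<rho> z)) + \<sigma> (\<tau> y) + \<sigma> (\<sigma> z)"
begin

definition braid :: "'a \<times> 'a \<Rightarrow> 'a \<times> 'a" where
  "braid = (\<lambda>(x, y). (\<tau> y + \<sigma> x, \<rho> x))"

definition side :: "'a \<times> 'a \<Rightarrow> 'a \<times> 'a" where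
  "side = (\<lambda>(a, x). (\<rho> x, inv \<tau> (a - \<sigma> x)))"

definition side_inv :: "'a \<times> 'a \<Rightarrow> 'a \<times> 'a" where
  "side_inv = (\<lambda>(u, y). (\<tau> y + \<sigma> (inv \<rho> u), inv \<rho> u))"

lemma tau_bij: "bij \<tau>" and rho_bij: "bij \<rho>"
  using tau_aut rho_aut by (simp_all add: group_aut_def)

lemma tau_hom: "group_hom \<tau>" and rho_hom: "group_hom \<rho>"
  using tau_aut rho_aut by (simp_all add: group_aut_def)

lemma inv_cancel [simp]:
  "\<tau> (inv \<tau> x) = x" "inv \<tau> (\<tau> x) = x" "\<rho> (inv \<rho> x) = x" "inv \<rho> (\<rho> x) = x"
  by (simp_all add: tau_bij rho_bij bij_is_inj bij_is_surj surj_f_inv_f)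

lemma rho_tau_apply: "\<rho> (\<tau> x) = \<tau> (\<rho> x)" and rho_sigma_apply: "\<rho> (\<sigma> x) = \<sigma> (\<rho> x)"
  using rho_tau rho_sigma by (metis comp_apply)+

text \<open>Putting z = 0 in the twist identity: tau commutes with sigma.\<close>
lemma tau_sigma: "\<tau> (\<sigma> x) = \<sigma> (\<tau> x)"
  using twist[rule_format, of x 0]
  by (simp add: hom_zero[OF sigma_hom] hom_zero[OF rho_hom] hom_zero[OF tau_hom])

text \<open>Putting y = 0 in the twist identity: sigma = g \<circ> sigma + sigma \<circ> sigma with g = tau \<circ> rho.\<close>
lemma sigma_split: "\<sigma> z = (\<tau> \<circ> \<rho>) (\<sigma> z) + \<sigma> (\<sigma> z)"
  using twist[rule_format, of 0 z]
  by (simp add: hom_zero[OF sigma_hom] hom_zero[OF tau_hom] rho_sigma_apply)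

lemma tau_rho_aut: "group_aut (\<tau> \<circ> \<rho>)"
  using tau_aut rho_aut by (simp add: group_aut_def group_hom_def bij_comp)

lemma sigma_tau_rho: "\<sigma> ((\<tau> \<circ> \<rho>) x) = (\<tau> \<circ> \<rho>) (\<sigma> x)"
  by (simp add: tau_sigma rho_sigma_apply)

lemma braid_bij: "bij braid"
  by (rule bij_by_inv[of "\<lambda>(u, v). (inv \<rho> v, inv \<tau> (u - \<sigma> (inv \<rho> v)))"])
     (auto simp: braid_def)

lemma braid_onto: "surj (\<lambda>y. fst (braid (x, y)))"
proof (rule surjI)
  show "fst (braid (x, inv \<tau> (a - \<sigma> x))) = a" for a by (simp add: braid_def)
qed

lemma side_inverse: "\<And>p. side_inv (side p) = p" "\<And>p. side (side_inv p) = p"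
  by (auto simp: side_def side_inv_def)

lemma inv_side: "inv side = side_inv"
  using side_inverse by (rule inv_by_inv)

lemma braid_sideways: "is_sideways braid side"
  using bij_by_inv[OF side_inverse] by (simp add: is_sideways_def braid_def side_def)

lemma side_diagonals:
  "bij (\<lambda>x. fst (side (x, x)))" "bij (\<lambda>x. snd (side (x, x)))"
  "bij (\<lambda>x. fst (inv side (x, x)))" "bij (\<lambda>x. snd (inv side (x, x)))"
proof -
  have shift: "bij (\<lambda>x. x - \<sigma> x)" and twisted: "bij (\<lambda>x. (\<tau> \<circ> \<rho>) x + \<sigma> x)"
    using shift_bij shift_twisted_bij tau_rho_aut sigma_hom sigma_tau_rho sigma_split by blast+
  have "(\<lambda>x. snd (side (x, x))) = inv \<tau> \<circ> (\<lambda>x. x - \<sigma> x)"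
    by (simp add: side_def fun_eq_iff)
  then show "bij (\<lambda>x. snd (side (x, x)))"
    using shift tau_bij by (simp add: bij_comp bij_imp_bij_inv)
  have "(\<lambda>x. fst (inv side (x, x))) = (\<lambda>x. (\<tau> \<circ> \<rho>) x + \<sigma> x) \<circ> inv \<rho>"
    by (simp add: inv_side side_inv_def fun_eq_iff)
  then show "bij (\<lambda>x. fst (inv side (x, x)))"
    using twisted rho_bij by (simp add: bij_comp bij_imp_bij_inv)
  show "bij (\<lambda>x. fst (side (x, x)))" using rho_bij by (simp add: side_def)
  show "bij (\<lambda>x. snd (inv side (x, x)))"
    using rho_bij by (simp add: inv_side side_inv_def bij_imp_bij_inv)
qed

theorem birack_braid: "birack braid"
proof -
  have "strongly_invertible braid"
    using braid_bij braid_sideways braid_onto side_diagonals by (rule strongly_invertibleI)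
  moreover have "yang_baxter braid"
    unfolding braid_def
    using yang_baxter_twisted[OF tau_hom rho_hom sigma_hom rho_tau_apply rho_sigma_apply] twist
    by blast
  ultimately show ?thesis by (simp add: birack_def)
qed

text \<open>On the diagonal, S\<inverse> has second component rho\<inverse> and first component
  tau(rho(rho\<inverse> x)) + sigma(rho\<inverse> x); composing with rho gives the kink map.\<close>
theorem kink_braid: "kink braid = (\<lambda>x. \<tau> (\<rho> x) + \<sigma> x)"
proof -
  have "inv (\<lambda>x. snd (inv side (x, x))) = \<rho>"
    by (simp add: inv_side side_inv_def inv_by_inv)
  then show ?thesis
    by (simp add: kink_eq[OF braid_sideways braid_onto] inv_side side_inv_def fun_eq_iff)
qed

end

theorem mainTheorem6:
  fixes \<tau> \<rho> \<sigma> :: "'a::group_add \<Rightarrow> 'a"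
  assumes "group_aut \<tau>" and "group_aut \<rho>" and "group_hom \<sigma>"
    and "\<rho> \<circ> \<tau> = \<tau> \<circ> \<rho>" and "\<rho> \<circ> \<sigma> = \<sigma> \<circ> \<rho>"
    and "\<forall>y z. \<tau> (\<sigma> y) + \<sigma> z = \<tau> (\<sigma> (\<rho> z)) + \<sigma> (\<tau> y) + \<sigma> (\<sigma> z)"
  shows "birack (\<lambda>(x, y). (\<tau> y + \<sigma> x, \<rho> x)) \<and>
         kink (\<lambda>(x, y). (\<tau> y + \<sigma> x, \<rho> x)) = (\<lambda>x. \<tau> (\<rho> x) + \<sigma> x)"
proof -
  interpret twisted_birack \<tau> \<rho> \<sigma> using assms by unfold_locales
  show ?thesis using birack_braid kink_braid by (simp add: braid_def)
qed

end
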